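(* Let $r\in\mathbb{N}$, $n\in\mathbb{N}$, $\alpha\in\mathbb{N}$, $\beta>\frac{n+r+1}{2\alpha}$, let $f\in C^n(\mathbb{R})$ with $f^{(n)}\in L_1(\mathbb{R})$, and let $\xi>0$. Then $$\|\Delta(x)\|_1\le\frac{1}{(r+1)(n-1)!\,\Gamma(\frac{1}{2\alpha})\Gamma(\beta-\frac{1}{2\alpha})}\left[\sum_{k=1}^{r+1}\binom{r+1}{k}\Gamma\left(\frac{n+k}{2\alpha}\right)\Gamma\left(\beta-\frac{n+k}{2\alpha}\right)\right]\omega_r(f^{(n)},\xi)_1\,\xi^n.$$ Hence $\|\Delta(x)\|_1\to0$ as $\xi\to0$. If additionally $f^{(2m)}\in L_1(\mathbb{R})$ for $m=1,\dots,\lfloor n/2\rfloor$, then $\|M_{r,\xi}(f)-f\|_1\to0$ as $\xi\to0$.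
   Context: For $r\in\mathbb{N}$ and $n\in\mathbb{Z}_+$ set $\alpha_j=(-1)^{r-j}\binom{r}{j}j^{-n}$ for $j=1,\dots,r$ and $\alpha_0=1-\sum_{j=1}^r(-1)^{r-j}\binom{r}{j}j^{-n}$. For $\alpha\in\mathbb{N}$, $\beta>\frac{1}{2\alpha}$, $\xi>0$, let $W=\frac{\Gamma(\beta)\alpha\xi^{2\alpha\beta-1}}{\Gamma(\frac{1}{2\alpha})\Gamma(\beta-\frac{1}{2\alpha})}$ and $M_{r,\xi}(f;x)=W\int_{-\infty}^{\infty}\frac{\sum_{j=0}^r\alpha_jf(x+jt)}{(t^{2\alpha}+\xi^{2\alpha})^{\beta}}dt$, $x\in\mathbb{R}$. Let $\delta_k=\sum_{j=1}^r\alpha_j j^k$ and $$\Delta(x):=M_{r,\xi}(f;x)-f(x)-\sum_{m=1}^{\lfloor n/2\rfloor}\frac{f^{(2m)}(x)\delta_{2m}}{(2m)!}\frac{\Gamma(\frac{2m+1}{2\alpha})\Gamma(\beta-\frac{2m+1}{2\alpha})}{\Gamma(\frac{1}{2\alpha})\Gamma(\beta-\frac{1}{2\alpha})}\xi^{2m}$$ (empty sum if $n=1$). For $g\in L_1(\mathbb{R})$, $\Delta_t^rg(x)=\sum_{j=0}^r(-1)^{r-j}\binom{r}{j}g(x+jt)$ and $\omega_r(g,h)_1=\sup_{|t|\le h}\|\Delta_t^rg(x)\|_{1,x}$, $h>0$. $\|\cdot\|_1$ is the $L_1(\mathbb{R})$ norm in $x$. *)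

theory Defs
  imports "HOL-Analysis.Analysis"
begin

definition alpha_coef :: "nat \<Rightarrow> nat \<Rightarrow> nat \<Rightarrow> real" where
  "alpha_coef r n j =
     (if j = 0 then 1 - (\<Sum>i=1..r. (-1)^(r-i) * real (r choose i) / real i ^ n)
      else (-1)^(r-j) * real (r choose j) / real j ^ n)"

definition delta_coef :: "nat \<Rightarrow> nat \<Rightarrow> nat \<Rightarrow> real" where
  "delta_coef r n k = (\<Sum>j=1..r. alpha_coef r n j * real j ^ k)"

definition W_const :: "nat \<Rightarrow> real \<Rightarrow> real \<Rightarrow> real" where
  "W_const al be xi =
     Gamma be * real al * xi powr (2 * real al * be - 1)
     / (Gamma (1 / (2 * real al)) * Gamma (be - 1 / (2 * real al)))"

definition M_op :: "nat \<Rightarrow> nat \<Rightarrow> nat \<Rightarrow> real \<Rightarrow> real \<Rightarrow> (real \<Rightarrow> real) \<Rightarrow> real \<Rightarrow> real" where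
  "M_op r n al be xi f x =
     W_const al be xi *
       (LINT t|lborel. (\<Sum>j=0..r. alpha_coef r n j * f (x + real j * t))
                      / (t ^ (2 * al) + xi ^ (2 * al)) powr be)"

definition Delta_op :: "nat \<Rightarrow> nat \<Rightarrow> nat \<Rightarrow> real \<Rightarrow> real \<Rightarrow> (real \<Rightarrow> real) \<Rightarrow> real \<Rightarrow> real" where
  "Delta_op r n al be xi f x =
     M_op r n al be xi f x - f x
     - (\<Sum>m=1..n div 2. (deriv ^^ (2*m)) f x * delta_coef r n (2*m) / fact (2*m)
          * (Gamma (real (2*m+1) / (2 * real al)) * Gamma (be - real (2*m+1) / (2 * real al))
             / (Gamma (1 / (2 * real al)) * Gamma (be - 1 / (2 * real al))))
          * xi ^ (2*m))"

definition fdiff :: "nat \<Rightarrow> real \<Rightarrow> (real \<Rightarrow> real) \<Rightarrow> real \<Rightarrow> real" where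
  "fdiff r t g x = (\<Sum>j=0..r. (-1)^(r-j) * real (r choose j) * g (x + real j * t))"

definition L1norm :: "(real \<Rightarrow> real) \<Rightarrow> ennreal" where
  "L1norm g = (\<integral>\<^sup>+ x. ennreal \<bar>g x\<bar> \<partial>lborel)"

definition omega1 :: "nat \<Rightarrow> (real \<Rightarrow> real) \<Rightarrow> real \<Rightarrow> ennreal" where
  "omega1 r g h = (SUP t\<in>{-h..h}. L1norm (fdiff r t g))"

definition bound_const :: "nat \<Rightarrow> nat \<Rightarrow> nat \<Rightarrow> real \<Rightarrow> real" where
  "bound_const r n al be =
     1 / (real (r+1) * fact (n-1) * Gamma (1 / (2 * real al)) * Gamma (be - 1 / (2 * real al)))
     * (\<Sum>k=1..r+1. real ((r+1) choose k) * Gamma (real (n+k) / (2 * real al))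
                      * Gamma (be - real (n+k) / (2 * real al)))"

end

theory Submission
  imports Defs
begin

text \<open>
  Taylor's formula with integral remainder at the nodes \<open>x + j t\<close>, together with the choice of
  the \<open>alpha_j\<close>, shows that the defect
  \<open>E(x,t) = sum_j alpha_j f(x + j t) - f(x) - sum_{k=1..n} f^(k)(x) delta_k t^k / k!\<close>
  equals \<open>t^n / (n-1)! * integral_0^1 (1-u)^(n-1) Delta^r_{u t} f^(n)(x) du\<close>.
  Integrated against the kernel, the odd moments of the Taylor polynomial vanish and the even ones are
  exactly the correction terms of \<open>Delta\<close>, so \<open>Delta(x) = W * integral E(x,t) / (t^(2 al) + xi^(2 al))^be dt\<close>.
  By Tonelli and \<open>||Delta^r_s g||_1 <= (1 + |s|/xi)^r omega_r(g,xi)_1\<close> (split a long step into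
  \<open>ceil(|s|/xi)\<close> short ones), \<open>||Delta||_1\<close> is bounded by \<open>omega_r(f^(n),xi)_1\<close> times kernel moments
  of \<open>|t|^(n+k-1)\<close>; these are Beta integrals and give the constant. Since
  \<open>omega_r(g,xi)_1 <= 2^r ||g||_1\<close>, all error terms are \<open>O(xi^n)\<close> or \<open>O(xi^(2m))\<close>.
\<close>

section \<open>The kernel and its moments\<close>

definition kernel_den :: "nat \<Rightarrow> real \<Rightarrow> real \<Rightarrow> real \<Rightarrow> real" where
  "kernel_den al be xi t = (t^(2*al) + xi^(2*al)) powr be"

text \<open>The integral of \<open>|t|^p / kernel_den al be xi t\<close> over the real line.\<close>
definition kernel_moment :: "nat \<Rightarrow> real \<Rightarrow> real \<Rightarrow> nat \<Rightarrow> real" where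
  "kernel_moment al be xi p = 1 / real al * xi powr (real p + 1 - 2 * real al * be) *
     Beta (real (p+1) / (2 * real al)) (be - real (p+1) / (2 * real al))"

lemma kernel_den_pos: "xi > 0 \<Longrightarrow> kernel_den al be xi t > 0"
proof -
  assume "xi > 0"
  then have "t^(2*al) + xi^(2*al) > 0"
    by (simp add: add_nonneg_pos power_mult)
  then show ?thesis by (simp add: kernel_den_def)
qed

lemma kernel_den_minus [simp]: "kernel_den al be xi (-t) = kernel_den al be xi t"
  by (simp add: kernel_den_def power_mult)

lemma kernel_den_measurable [measurable]: "kernel_den al be xi \<in> borel_measurable borel"
  unfolding kernel_den_def by measurable

lemma kernel_moment_pos:
  assumes "al \<ge> 1" and "xi > 0" and "be > real (p+1) / (2 * real al)"
  shows "kernel_moment al be xi p > 0"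
proof -
  have "real (p+1) / (2 * real al) > 0" using assms(1) by simp
  then have "Beta (real (p+1) / (2 * real al)) (be - real (p+1) / (2 * real al)) > 0"
    using assms(3) by (simp add: Beta_def)
  then show ?thesis using assms(1,2) by (simp add: kernel_moment_def)
qed

text \<open>
  The substitution \<open>t = xi (w/(1-w))^(1/(2 al))\<close> maps \<open>(0,1)\<close> onto \<open>(0,\<infinity>)\<close>
  and turns the half-line moments into Beta integrals.
\<close>
definition beta_subst :: "real \<Rightarrow> real \<Rightarrow> real \<Rightarrow> real" where
  "beta_subst xi c w = xi * (w / (1 - w)) powr c"

lemma beta_subst_has_derivative:
  assumes "0 < w" "w < 1"
  shows "(beta_subst xi c has_real_derivative xi * c * (w / (1 - w)) powr (c - 1) / (1 - w)^2) (at w)"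
proof -
  have "((\<lambda>w. w / (1 - w)) has_real_derivative 1 / (1 - w)^2) (at w)"
    using assms by (auto intro!: derivative_eq_intros simp: field_simps power2_eq_square)
  then have "((\<lambda>w. xi * (w / (1 - w)) powr c) has_real_derivative
      xi * (c * (w / (1 - w)) powr (c - 1) * (1 / (1 - w)^2))) (at w)"
    using assms by (auto intro!: derivative_eq_intros DERIV_powr simp: power2_eq_square)
  then show ?thesis by (simp add: beta_subst_def[abs_def] mult.assoc)
qed

lemma beta_subst_strict_mono:
  assumes "xi > 0" and "c > 0"
  shows "strict_mono_on {0<..<1} (beta_subst xi c)"
proof (rule strict_mono_onI)
  fix u v :: real assume "u \<in> {0<..<1}" "v \<in> {0<..<1}" "u < v"
  then have "0 < u / (1 - u)" and "u / (1 - u) < v / (1 - v)" by (auto simp: field_simps)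
  then have "(u / (1 - u)) powr c < (v / (1 - v)) powr c" using assms(2) by (intro powr_less_mono2) auto
  then show "beta_subst xi c u < beta_subst xi c v" using assms(1) by (simp add: beta_subst_def)
qed

lemma beta_subst_image:
  assumes "xi > 0" and "c > 0"
  shows "beta_subst xi c ` {0<..<1} = {0<..}"
proof
  show "beta_subst xi c ` {0<..<1} \<subseteq> {0<..}" using assms(1) by (auto simp: beta_subst_def)
  show "{0<..} \<subseteq> beta_subst xi c ` {0<..<1}"
  proof
    fix v :: real assume "v \<in> {0<..}"
    define q where "q = (v / xi) powr (1 / c)"
    have "q > 0" using \<open>v \<in> {0<..}\<close> assms(1) by (simp add: q_def)
    then have "q / (1 + q) \<in> {0<..<1}" and "(q / (1 + q)) / (1 - q / (1 + q)) = q"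
      by (auto simp: field_simps)
    moreover have "xi * q powr c = v"
      using \<open>v \<in> {0<..}\<close> assms by (simp add: q_def powr_powr)
    ultimately show "v \<in> beta_subst xi c ` {0<..<1}"
      by (intro image_eqI[of v _ "q / (1 + q)"]) (simp_all add: beta_subst_def)
  qed
qed

lemma kernel_beta_subst_integrand:
  fixes p al :: nat
  assumes al: "al \<ge> 1" and xi: "xi > 0" and w: "0 < w" "w < 1"
  defines "c \<equiv> 1 / (2 * real al)" and "a \<equiv> real (p+1) / (2 * real al)"
  shows "xi * c * (w / (1 - w)) powr (c - 1) / (1 - w)^2
           * (beta_subst xi c w ^ p / kernel_den al be xi (beta_subst xi c w))
         = c * xi powr (real p + 1 - 2 * real al * be) * (w powr (a - 1) * (1 - w) powr (be - a - 1))"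
proof -
  define q where "q = w / (1 - w)"
  have q: "q > 0" and omw: "1 - w > 0" using w by (simp_all add: q_def)
  have ac: "a = c * (real p + 1)" by (simp add: a_def c_def)
  have gw: "beta_subst xi c w = xi * q powr c" by (simp add: beta_subst_def q_def)
  have Qp: "(q powr c)^p = q powr (c * real p)"
    using q by (simp add: powr_realpow[symmetric] powr_powr mult.commute)
  have Q2: "(q powr c)^(2*al) = q"
    using q al by (simp add: powr_realpow[symmetric] powr_powr c_def)
  have "beta_subst xi c w ^ (2*al) = xi^(2*al) * q"
    by (simp add: gw power_mult_distrib Q2)
  then have "beta_subst xi c w ^ (2*al) + xi^(2*al) = xi^(2*al) / (1 - w)"
    using w by (simp add: q_def field_simps)
  then have K: "kernel_den al be xi (beta_subst xi c w) = xi powr (2 * real al * be) * (1 - w) powr (-be)"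
    using xi omw unfolding kernel_den_def
    by (simp add: powr_divide powr_realpow[symmetric] powr_powr powr_minus_divide)
  have "xi * c * q powr (c - 1) / (1 - w)^2 * (beta_subst xi c w ^ p / kernel_den al be xi (beta_subst xi c w))
      = c * (xi * xi^p / xi powr (2 * real al * be)) * (q powr (c - 1) * q powr (c * real p))
          * ((1 - w) powr be / (1 - w)^2)"
    using omw unfolding K by (simp add: gw power_mult_distrib Qp powr_minus_divide field_simps)
  also have "q powr (c - 1) * q powr (c * real p) = q powr (a - 1)"
    by (simp add: powr_add[symmetric] ac algebra_simps)
  also have "q powr (a - 1) = w powr (a - 1) * (1 - w) powr (1 - a)"
    using w powr_minus_divide[of "1 - w" "a - 1"] by (simp add: q_def powr_divide)
  also have "xi * xi^p / xi powr (2 * real al * be) = xi powr (real p + 1 - 2 * real al * be)"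
    using xi by (simp add: powr_diff powr_add powr_realpow[symmetric] add.commute)
  also have "(1 - w) powr be / (1 - w)^2 = (1 - w) powr (be - 2)"
    using omw by (simp add: powr_diff powr_numeral)
  finally show ?thesis
    by (simp add: q_def ac_simps flip: powr_add)
qed

lemma has_integral_kernel_moment_half_line:
  fixes p al :: nat
  assumes al: "al \<ge> 1" and xi: "xi > 0" and be: "be > real (p+1) / (2 * real al)"
  shows "((\<lambda>t. t^p / kernel_den al be xi t) has_integral kernel_moment al be xi p / 2) {0<..}"
proof -
  define c where "c = 1 / (2 * real al)"
  define a where "a = real (p+1) / (2 * real al)"
  define C where "C = c * xi powr (real p + 1 - 2 * real al * be)"
  define g' where "g' w = xi * c * (w / (1 - w)) powr (c - 1) / (1 - w)^2" for w
  define F where "F t = t^p / kernel_den al be xi t" for t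
  have c: "c > 0" and a: "a > 0" and ba: "be - a > 0" using al be by (simp_all add: c_def a_def)
  have der: "(beta_subst xi c has_real_derivative g' w) (at w within {0<..<1})"
    if "w \<in> {0<..<1}" for w
    using beta_subst_has_derivative[of w xi c] that by (auto intro: has_field_derivative_at_within simp: g'_def)
  have key: "\<bar>g' w\<bar> * F (beta_subst xi c w) = C * (w powr (a - 1) * (1 - w) powr (be - a - 1))"
    if "w \<in> {0<..<1}" for w
    using that kernel_beta_subst_integrand[OF al xi, of w p be] xi c
    by (simp add: g'_def F_def C_def a_def c_def)
  have "((\<lambda>w. w powr (a - 1) * (1 - w) powr ((be - a) - 1)) has_integral Beta a (be - a)) {0..1}"
    by (rule has_integral_Beta_real[OF a ba])
  then have beta: "((\<lambda>w. C * (w powr (a - 1) * (1 - w) powr (be - a - 1))) has_integral C * Beta a (be - a)) {0<..<1}"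
    by (simp add: has_integral_Icc_iff_Ioo has_integral_mult_right)
  have absint: "(\<lambda>w. \<bar>g' w\<bar> * F (beta_subst xi c w)) absolutely_integrable_on {0<..<1}"
  proof -
    have "(\<lambda>w. C * (w powr (a - 1) * (1 - w) powr (be - a - 1))) absolutely_integrable_on {0<..<1}"
      using beta c by (subst absolutely_integrable_on_iff_nonneg) (auto simp: C_def)
    then show ?thesis by (rule absolutely_integrable_spike[where S = "{}"]) (auto simp: key)
  qed
  have "integral {0<..<1} (\<lambda>w. \<bar>g' w\<bar> * F (beta_subst xi c w)) = C * Beta a (be - a)"
    using beta key by (metis (no_types, lifting) integral_cong integral_unique)
  then have "F absolutely_integrable_on {0<..} \<and> integral {0<..} F = C * Beta a (be - a)"
    using has_absolute_integral_change_of_variables_1'[of "{0<..<1}" "beta_subst xi c" g' F "C * Beta a (be - a)"]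
      der absint strict_mono_on_imp_inj_on[OF beta_subst_strict_mono[OF xi c]]
    by (auto simp: beta_subst_image[OF xi c])
  then have "(F has_integral C * Beta a (be - a)) {0<..}"
    by (metis absolutely_integrable_on_def has_integral_integrable_integral)
  moreover have "C * Beta a (be - a) = kernel_moment al be xi p / 2"
    by (simp add: C_def c_def a_def kernel_moment_def)
  ultimately show ?thesis by (simp add: F_def[abs_def])
qed

lemma nn_integral_kernel_abs_moment:
  fixes p al :: nat
  assumes al: "al \<ge> 1" and xi: "xi > 0" and be: "be > real (p+1) / (2 * real al)"
  shows "(\<integral>\<^sup>+t. ennreal (\<bar>t\<bar>^p / kernel_den al be xi t) \<partial>lborel) = ennreal (kernel_moment al be xi p)"
proof -
  define h where "h t = ennreal (indicator {0<..} t * (t^p / kernel_den al be xi t))" for t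
  have h: "(\<integral>\<^sup>+t. h t \<partial>lborel) = ennreal (kernel_moment al be xi p / 2)"
    unfolding h_def
    by (rule nn_integral_has_integral_lebesgue[OF _ has_integral_kernel_moment_half_line[OF al xi be]])
       (use kernel_den_pos[OF xi] in \<open>auto intro: less_imp_le\<close>)
  have [measurable]: "h \<in> borel_measurable borel" unfolding h_def by measurable
  have h_reflect: "(\<integral>\<^sup>+t. h (-t) \<partial>lborel) = ennreal (kernel_moment al be xi p / 2)"
    using nn_integral_real_affine[of h "-1" 0] h by simp
  have "(\<integral>\<^sup>+t. ennreal (\<bar>t\<bar>^p / kernel_den al be xi t) \<partial>lborel) = (\<integral>\<^sup>+t. h t + h (-t) \<partial>lborel)"
  proof (intro nn_integral_cong_AE eventually_mono[OF AE_lborel_singleton[of 0]])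
    fix t :: real assume "t \<noteq> 0"
    then show "ennreal (\<bar>t\<bar>^p / kernel_den al be xi t) = h t + h (-t)"
      by (cases "t > 0") (auto simp: h_def indicator_def power_minus_odd)
  qed
  also have "\<dots> = ennreal (kernel_moment al be xi p / 2) + ennreal (kernel_moment al be xi p / 2)"
    by (subst nn_integral_add) (simp_all add: h h_reflect)
  also have "\<dots> = ennreal (kernel_moment al be xi p)"
    using kernel_moment_pos[OF al xi be] by (simp flip: ennreal_plus)
  finally show ?thesis .
qed

lemma
  fixes k al :: nat
  assumes al: "al \<ge> 1" and xi: "xi > 0" and be: "be > real (k+1) / (2 * real al)"
  shows kernel_moment_integrable: "integrable lborel (\<lambda>t. t^k / kernel_den al be xi t)"
    and integral_kernel_moment:
      "(LINT t|lborel. t^k / kernel_den al be xi t) = (if even k then kernel_moment al be xi k else 0)"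
proof -
  note K = kernel_den_pos[OF xi]
  have "(\<integral>\<^sup>+t. ennreal (norm (t^k / kernel_den al be xi t)) \<partial>lborel) = ennreal (kernel_moment al be xi k)"
    using nn_integral_kernel_abs_moment[OF al xi be] K by (simp add: abs_mult power_abs abs_of_pos)
  then show int: "integrable lborel (\<lambda>t. t^k / kernel_den al be xi t)"
    by (intro integrableI_bounded) auto
  show "(LINT t|lborel. t^k / kernel_den al be xi t) = (if even k then kernel_moment al be xi k else 0)"
  proof (cases "even k")
    case True
    have "ennreal (LINT t|lborel. t^k / kernel_den al be xi t) = (\<integral>\<^sup>+t. ennreal (t^k / kernel_den al be xi t) \<partial>lborel)"
      using True K by (intro nn_integral_eq_integral[symmetric] int) (auto simp: less_imp_le)
    also have "\<dots> = ennreal (kernel_moment al be xi k)"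
      using nn_integral_kernel_abs_moment[OF al xi be] True by (simp add: power_even_abs)
    finally show ?thesis
      using True K kernel_moment_pos[OF al xi be]
      by (subst (asm) ennreal_inj) (auto intro!: integral_nonneg_AE simp: less_imp_le)
  next
    case False
    have "(LINT t|lborel. t^k / kernel_den al be xi t)
        = \<bar>-1\<bar> *\<^sub>R (LINT t|lborel. (0 + -1 * t)^k / kernel_den al be xi (0 + -1 * t))"
      by (rule lborel_integral_real_affine) simp
    also have "\<dots> = - (LINT t|lborel. t^k / kernel_den al be xi t)"
      using False by simp
    finally show ?thesis using False by simp
  qed
qed

lemma nn_integral_kernel_moment_sum:
  fixes p :: "'i \<Rightarrow> nat"
  assumes al: "al \<ge> 1" and xi: "xi > 0" and I: "finite I"
    and be: "\<And>i. i \<in> I \<Longrightarrow> be > real (p i + 1) / (2 * real al)"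
    and a: "\<And>i. i \<in> I \<Longrightarrow> a i \<ge> 0"
  shows "(\<integral>\<^sup>+t. ennreal (\<Sum>i\<in>I. a i * (\<bar>t\<bar>^(p i) / kernel_den al be xi t)) \<partial>lborel)
     = ennreal (\<Sum>i\<in>I. a i * kernel_moment al be xi (p i))"
proof -
  have K: "kernel_den al be xi t > 0" for t by (rule kernel_den_pos[OF xi])
  have "(\<integral>\<^sup>+t. ennreal (\<Sum>i\<in>I. a i * (\<bar>t\<bar>^(p i) / kernel_den al be xi t)) \<partial>lborel)
      = (\<integral>\<^sup>+t. (\<Sum>i\<in>I. ennreal (a i) * ennreal (\<bar>t\<bar>^(p i) / kernel_den al be xi t)) \<partial>lborel)"
  proof (intro nn_integral_cong)
    fix t
    have "ennreal (\<Sum>i\<in>I. a i * (\<bar>t\<bar>^(p i) / kernel_den al be xi t))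
        = (\<Sum>i\<in>I. ennreal (a i * (\<bar>t\<bar>^(p i) / kernel_den al be xi t)))"
      using a K by (intro sum_ennreal[symmetric] mult_nonneg_nonneg divide_nonneg_pos) auto
    also have "\<dots> = (\<Sum>i\<in>I. ennreal (a i) * ennreal (\<bar>t\<bar>^(p i) / kernel_den al be xi t))"
      using a K by (intro sum.cong refl ennreal_mult divide_nonneg_pos) auto
    finally show "ennreal (\<Sum>i\<in>I. a i * (\<bar>t\<bar>^(p i) / kernel_den al be xi t))
        = (\<Sum>i\<in>I. ennreal (a i) * ennreal (\<bar>t\<bar>^(p i) / kernel_den al be xi t))" .
  qed
  also have "\<dots> = (\<Sum>i\<in>I. ennreal (a i) * (\<integral>\<^sup>+t. ennreal (\<bar>t\<bar>^(p i) / kernel_den al be xi t) \<partial>lborel))"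
    using I by (simp add: nn_integral_sum nn_integral_cmult)
  also have "\<dots> = (\<Sum>i\<in>I. ennreal (a i * kernel_moment al be xi (p i)))"
    using a kernel_moment_pos[OF al xi be]
    by (intro sum.cong refl) (simp add: nn_integral_kernel_abs_moment[OF al xi be] ennreal_mult less_imp_le)
  also have "\<dots> = ennreal (\<Sum>i\<in>I. a i * kernel_moment al be xi (p i))"
    using a kernel_moment_pos[OF al xi be] by (intro sum_ennreal) (simp add: less_imp_le)
  finally show ?thesis .
qed

lemma W_const_pos:
  assumes "al \<ge> 1" and "xi > 0" and "be > 1 / (2 * real al)"
  shows "W_const al be xi > 0"
proof -
  have "1 / (2 * real al) > 0" using assms(1) by simp
  then have "be > 0" using assms(3) by linarith
  then show ?thesis using assms \<open>1 / (2 * real al) > 0\<close> Gamma_real_pos[OF \<open>be > 0\<close>]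
    unfolding W_const_def by (intro divide_pos_pos mult_pos_pos) auto
qed

definition gamma_ratio :: "nat \<Rightarrow> real \<Rightarrow> nat \<Rightarrow> real" where
  "gamma_ratio al be p = Gamma (real p / (2 * real al)) * Gamma (be - real p / (2 * real al))
     / (Gamma (1 / (2 * real al)) * Gamma (be - 1 / (2 * real al)))"

lemma gamma_ratio_1:
  assumes "al \<ge> 1" and "be > 1 / (2 * real al)"
  shows "gamma_ratio al be 1 = 1"
proof -
  have "Gamma (1 / (2 * real al)) > 0" and "Gamma (be - 1 / (2 * real al)) > 0"
    using assms by auto
  then show ?thesis by (simp add: gamma_ratio_def)
qed

lemma bound_const_eq:
  "bound_const r n al be
     = (\<Sum>k=1..r+1. real ((r+1) choose k) * gamma_ratio al be (n+k)) / (real (r+1) * fact (n-1))"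
proof -
  define G where "G = Gamma (1 / (2 * real al)) * Gamma (be - 1 / (2 * real al))"
  define X where "X k = Gamma (real (n+k) / (2 * real al)) * Gamma (be - real (n+k) / (2 * real al))" for k
  have "(\<Sum>k=1..r+1. real ((r+1) choose k) * gamma_ratio al be (n+k)) = (\<Sum>k=1..r+1. real ((r+1) choose k) * X k) / G"
    unfolding sum_divide_distrib by (intro sum.cong refl) (simp add: gamma_ratio_def X_def G_def)
  moreover have "bound_const r n al be = 1 / (real (r+1) * fact (n-1) * G) * (\<Sum>k=1..r+1. real ((r+1) choose k) * X k)"
    by (simp add: bound_const_def G_def X_def mult.assoc)
  ultimately show ?thesis by (simp add: mult_ac)
qed

lemma W_const_mult_kernel_moment:
  fixes k al :: nat
  assumes al: "al \<ge> 1" and xi: "xi > 0" and be: "be > real (k+1) / (2 * real al)"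
  shows "W_const al be xi * kernel_moment al be xi k = xi^k * gamma_ratio al be (k+1)"
proof -
  have "real (k+1) / (2 * real al) > 0" using al by simp
  then have "Gamma be \<noteq> 0" using be by (metis Gamma_real_pos less_irrefl order.strict_trans)
  have P: "xi powr (2 * real al * be - 1) * xi powr (real k + 1 - 2 * real al * be) = xi^k"
    using xi by (simp add: powr_realpow flip: powr_add)
  show ?thesis
    using al \<open>Gamma be \<noteq> 0\<close> unfolding W_const_def kernel_moment_def Beta_def gamma_ratio_def
    by (simp add: P[symmetric] field_simps)
qed

section \<open>Finite differences and the \<open>L\<^sub>1\<close> modulus of smoothness\<close>

lemma minus_one_power_diff: "j \<le> r \<Longrightarrow> (-1::'a::field)^(r - j) = (-1)^r * (-1)^j"
  by (simp add: power_diff divide_inverse flip: power_inverse)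

lemma sum_alternating_binomial:
  assumes "r \<ge> 1"
  shows "(\<Sum>j=0..r. (-1::real)^(r - j) * real (r choose j)) = 0"
proof -
  have "(\<Sum>j=0..r. (-1::real)^(r - j) * real (r choose j)) = (\<Sum>j\<le>r. (-1)^r * ((-1)^j * real (r choose j)))"
    unfolding atLeast0AtMost by (intro sum.cong) (auto simp: minus_one_power_diff)
  then show ?thesis
    using choose_alternating_sum[of r] assms by (simp flip: sum_distrib_left)
qed

lemma fdiff_0 [simp]: "fdiff 0 t g x = g x"
  by (simp add: fdiff_def)

lemma fdiff_step_0:
  assumes "r \<ge> 1"
  shows "fdiff r 0 g x = 0"
  using sum_alternating_binomial[OF assms] unfolding fdiff_def by (simp flip: sum_distrib_right)

lemma fdiff_sum:
  assumes "finite I"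
  shows "fdiff r t (\<lambda>y. \<Sum>i\<in>I. H i y) x = (\<Sum>i\<in>I. fdiff r t (H i) x)"
  unfolding fdiff_def by (simp add: sum_distrib_left sum.swap[of _ I])

lemma fdiff_diff: "fdiff r t (\<lambda>y. G y - H y) x = fdiff r t G x - fdiff r t H x"
  unfolding fdiff_def by (simp add: algebra_simps sum_subtractf)

lemma fdiff_shift: "fdiff r t (\<lambda>y. H (y + c)) x = fdiff r t H (x + c)"
  unfolding fdiff_def by (simp add: algebra_simps)

lemma fdiff_Suc: "fdiff (Suc r) t g x = fdiff r t g (x + t) - fdiff r t g x"
proof -
  define G where "G j = g (x + real j * t)" for j
  define S where "S = (\<Sum>j<r. (-1::real)^(r - Suc j) * real (r choose Suc j) * G (Suc j))"
  have sign: "(-1::real)^(r - j) = - ((-1)^(r - Suc j))" if "j < r" for j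
    using that by (metis Suc_diff_Suc mult_minus1 power_Suc)
  have fdiff_r: "fdiff r t g x = (-1)^r * G 0 + S"
    unfolding fdiff_def G_def S_def atLeast0AtMost lessThan_Suc_atMost[symmetric]
    by (subst sum.lessThan_Suc_shift) simp
  have "fdiff (Suc r) t g x = (-1)^(Suc r) * G 0 + (\<Sum>j\<le>r. (-1)^(r - j) * real (Suc r choose Suc j) * G (Suc j))"
    unfolding fdiff_def G_def atLeast0AtMost by (subst sum.atMost_Suc_shift) simp
  also have "(\<Sum>j\<le>r. (-1)^(r - j) * real (Suc r choose Suc j) * G (Suc j)) =
      (\<Sum>j\<le>r. (-1)^(r - j) * real (r choose j) * G (Suc j)) +
      (\<Sum>j<r. (-1)^(r - j) * real (r choose Suc j) * G (Suc j))"
    by (simp add: sum.distrib[symmetric] algebra_simps lessThan_Suc_atMost[symmetric])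
  also have "(\<Sum>j\<le>r. (-1)^(r - j) * real (r choose j) * G (Suc j)) = fdiff r t g (x + t)"
    by (simp add: fdiff_def G_def atLeast0AtMost algebra_simps)
  also have "(\<Sum>j<r. (-1)^(r - j) * real (r choose Suc j) * G (Suc j)) = - S"
    by (simp add: S_def sign sum_negf[symmetric])
  finally show ?thesis by (simp add: fdiff_r)
qed

lemma fdiff_Suc_inner: "fdiff (Suc r) t g x = fdiff r t (\<lambda>y. g (y + t) - g y) x"
  by (simp add: fdiff_Suc fdiff_diff fdiff_shift)

lemma fdiff_measurable [measurable]:
  assumes [measurable]: "g \<in> borel_measurable borel"
  shows "fdiff r t g \<in> borel_measurable borel"
  unfolding fdiff_def by measurable

lemma continuous_on_fdiff_step:
  assumes "continuous_on UNIV g"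
  shows "continuous_on S (\<lambda>u. fdiff r (u * t) g x)"
  unfolding fdiff_def by (intro continuous_intros continuous_on_compose2[OF assms]) auto

lemma L1norm_shift:
  assumes [measurable]: "G \<in> borel_measurable borel"
  shows "L1norm (\<lambda>x. G (x + c)) = L1norm G"
  using nn_integral_real_affine[of "\<lambda>x. ennreal \<bar>G x\<bar>" 1 c] by (simp add: L1norm_def add.commute)

lemma L1norm_cmult:
  assumes [measurable]: "G \<in> borel_measurable borel"
  shows "L1norm (\<lambda>x. c * G x) = ennreal \<bar>c\<bar> * L1norm G"
  unfolding L1norm_def by (subst nn_integral_cmult[symmetric]) (auto simp: abs_mult ennreal_mult)

lemma L1norm_sum_le:
  assumes "finite I" and [measurable]: "\<And>i. G i \<in> borel_measurable borel"
  shows "L1norm (\<lambda>x. \<Sum>i\<in>I. G i x) \<le> (\<Sum>i\<in>I. L1norm (G i))"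
proof -
  have "ennreal \<bar>\<Sum>i\<in>I. G i x\<bar> \<le> (\<Sum>i\<in>I. ennreal \<bar>G i x\<bar>)" for x
    using ennreal_leI[OF sum_abs[of "\<lambda>i. G i x" I]] by (simp add: sum_ennreal)
  then have "L1norm (\<lambda>x. \<Sum>i\<in>I. G i x) \<le> (\<integral>\<^sup>+x. (\<Sum>i\<in>I. ennreal \<bar>G i x\<bar>) \<partial>lborel)"
    unfolding L1norm_def by (intro nn_integral_mono)
  also have "\<dots> = (\<Sum>i\<in>I. L1norm (G i))"
    unfolding L1norm_def by (rule nn_integral_sum) auto
  finally show ?thesis .
qed

lemma L1norm_eq_integral:
  assumes "integrable lborel G"
  shows "L1norm G = ennreal (LINT x|lborel. \<bar>G x\<bar>)"
  unfolding L1norm_def using assms by (intro nn_integral_eq_integral) auto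

lemma L1norm_fdiff_le:
  assumes [measurable]: "g \<in> borel_measurable borel"
  shows "L1norm (fdiff r t g) \<le> ennreal (2^r) * L1norm g"
proof -
  have "L1norm (fdiff r t g) \<le> (\<Sum>j=0..r. L1norm (\<lambda>x. (-1)^(r - j) * real (r choose j) * g (x + real j * t)))"
    unfolding fdiff_def[abs_def] by (rule L1norm_sum_le) auto
  also have "\<dots> = (\<Sum>j=0..r. ennreal (real (r choose j)) * L1norm g)"
    by (intro sum.cong refl) (simp add: L1norm_cmult L1norm_shift mult.assoc abs_mult)
  also have "\<dots> = ennreal (\<Sum>j=0..r. real (r choose j)) * L1norm g"
    by (simp add: sum_distrib_right flip: sum_ennreal)
  also have "(\<Sum>j=0..r. real (r choose j)) = 2^r"
    using choose_row_sum[of r] by (simp add: atLeast0AtMost flip: of_nat_sum)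
  finally show ?thesis .
qed

lemma omega1_le_L1norm:
  assumes "g \<in> borel_measurable borel"
  shows "omega1 r g h \<le> ennreal (2^r) * L1norm g"
  unfolding omega1_def by (rule SUP_least) (rule L1norm_fdiff_le[OF assms])

text \<open>A step \<open>m h\<close> is split into \<open>m\<close> steps \<open>h\<close> by telescoping, once for each of the \<open>r\<close> differences.\<close>
lemma L1norm_fdiff_multiple_step_le:
  assumes "m \<ge> 1" and "g \<in> borel_measurable borel"
  shows "L1norm (fdiff r (real m * h) g) \<le> ennreal (real m ^ r) * L1norm (fdiff r h g)"
  using assms(2)
proof (induction r arbitrary: g)
  case 0
  then show ?case by simp
next
  case (Suc r)
  note [measurable] = Suc.prems
  define Dg where "Dg y = g (y + h) - g y" for y
  have [measurable]: "Dg \<in> borel_measurable borel" unfolding Dg_def by measurable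
  have telescope: "g (y + real m * h) - g y = (\<Sum>i<m. Dg (y + real i * h))" for y
    using sum_lessThan_telescope[of "\<lambda>i. g (y + real i * h)" m] by (simp add: Dg_def algebra_simps)
  have "fdiff (Suc r) (real m * h) g = (\<lambda>x. \<Sum>i<m. fdiff r (real m * h) Dg (x + real i * h))"
    unfolding fdiff_Suc_inner[abs_def] telescope by (rule ext) (simp add: fdiff_sum fdiff_shift)
  then have "L1norm (fdiff (Suc r) (real m * h) g) \<le> (\<Sum>i<m. L1norm (\<lambda>x. fdiff r (real m * h) Dg (x + real i * h)))"
    by (simp add: L1norm_sum_le)
  also have "\<dots> = of_nat m * L1norm (fdiff r (real m * h) Dg)"
    by (simp add: L1norm_shift)
  also have "\<dots> \<le> of_nat m * (ennreal (real m ^ r) * L1norm (fdiff r h Dg))"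
    by (intro mult_left_mono Suc.IH) auto
  also have "fdiff r h Dg = fdiff (Suc r) h g"
    by (rule ext) (simp add: fdiff_Suc_inner Dg_def[abs_def])
  finally show ?case
    by (simp add: ennreal_of_nat_eq_real_of_nat ennreal_mult mult.assoc)
qed

lemma L1norm_fdiff_le_omega1:
  assumes r: "r \<ge> 1" and xi: "xi > 0" and [measurable]: "g \<in> borel_measurable borel"
  shows "L1norm (fdiff r s g) \<le> ennreal ((1 + \<bar>s\<bar> / xi)^r) * omega1 r g xi"
proof (cases "s = 0")
  case True
  then show ?thesis using fdiff_step_0[OF r] by (simp add: L1norm_def)
next
  case False
  define m where "m = nat \<lceil>\<bar>s\<bar> / xi\<rceil>"
  have "\<bar>s\<bar> / xi > 0" using False xi by simp
  then have m: "m \<ge> 1" "\<bar>s\<bar> / xi \<le> real m" "real m \<le> 1 + \<bar>s\<bar> / xi"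
    unfolding m_def by linarith+
  have "\<bar>s / real m\<bar> \<le> xi"
    using m xi by (simp add: abs_div field_simps)
  then have "s / real m \<in> {-xi..xi}"
    using abs_le_iff[THEN iffD1] by fastforce
  then have "L1norm (fdiff r (s / real m) g) \<le> omega1 r g xi"
    unfolding omega1_def by (rule SUP_upper)
  moreover have "L1norm (fdiff r s g) \<le> ennreal (real m ^ r) * L1norm (fdiff r (s / real m) g)"
    using L1norm_fdiff_multiple_step_le[OF m(1), of g r "s / real m"] m(1) by simp
  moreover have "ennreal (real m ^ r) \<le> ennreal ((1 + \<bar>s\<bar> / xi)^r)"
    using m by (intro ennreal_leI power_mono) auto
  ultimately show ?thesis
    by (meson mult_mono order_trans zero_le)
qed

section \<open>Taylor expansion of the difference scheme\<close>

lemma has_integral_taylor_remainder: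
  fixes f :: "real \<Rightarrow> real"
  assumes n: "n \<ge> 1"
    and D: "\<And>k x. k < n \<Longrightarrow> ((deriv ^^ k) f has_real_derivative (deriv ^^ Suc k) f x) (at x)"
  shows "((\<lambda>u. s^n / fact (n-1) * ((1-u)^(n-1) * (deriv ^^ n) f (x + u * s))) has_integral
           f (x + s) - (\<Sum>k<n. (deriv ^^ k) f x * s^k / fact k)) {0..1}"
proof -
  define Df where "Df m u = s^m * (deriv ^^ m) f (x + u * s)" for m u
  have "(Df m has_vector_derivative Df (Suc m) u) (at u within {0..1})" if "m < n" for m u
  proof -
    have "((\<lambda>u. x + u * s) has_real_derivative s) (at u)"
      by (auto intro!: derivative_eq_intros)
    from DERIV_chain2[OF D[OF that] this]
    have "(Df m has_real_derivative Df (Suc m) u) (at u)"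
      unfolding Df_def by (auto intro!: derivative_eq_intros simp: mult_ac)
    then show ?thesis
      by (simp add: has_real_derivative_iff_has_vector_derivative[symmetric] has_field_derivative_at_within)
  qed
  from Taylor_has_integral[of n Df "Df 0" 0 1, OF _ refl this]
  show ?thesis using n by (simp add: Df_def mult_ac)
qed

lemma alpha_coef_mult_power: "j \<ge> 1 \<Longrightarrow> alpha_coef r n j * real j ^ n = (-1)^(r - j) * real (r choose j)"
  by (simp add: alpha_coef_def)

lemma delta_coef_0: "delta_coef r n 0 = 1 - alpha_coef r n 0"
  by (simp add: delta_coef_def alpha_coef_def)

lemma delta_coef_self:
  assumes "r \<ge> 1"
  shows "delta_coef r n n = - ((-1)^r)"
proof -
  have "(\<Sum>j=0..r. (-1::real)^(r - j) * real (r choose j)) = (-1)^r + delta_coef r n n"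
    by (simp add: delta_coef_def alpha_coef_mult_power sum.atLeast_Suc_atMost)
  then show ?thesis using sum_alternating_binomial[OF assms] by simp
qed

text \<open>\<open>Delta(x) = W * integral comb_remainder r n f x t / kernel_den t dt\<close>, see \<open>Delta_op_eq_integral\<close>.\<close>
definition comb_remainder :: "nat \<Rightarrow> nat \<Rightarrow> (real \<Rightarrow> real) \<Rightarrow> real \<Rightarrow> real \<Rightarrow> real" where
  "comb_remainder r n f x t = (\<Sum>j=0..r. alpha_coef r n j * f (x + real j * t)) - f x
     - (\<Sum>k=1..n. (deriv ^^ k) f x * t^k * delta_coef r n k / fact k)"

lemma comb_remainder_eq_taylor_remainders:
  assumes r: "r \<ge> 1" and n: "n \<ge> 1"
  shows "comb_remainder r n f x t
     = (\<Sum>j=1..r. alpha_coef r n j * (f (x + real j * t) - (\<Sum>k<n. (deriv ^^ k) f x * (real j * t)^k / fact k)))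
       + (-1)^r * (deriv ^^ n) f x * t^n / fact n"
proof -
  define c where "c k = (deriv ^^ k) f x * t^k * delta_coef r n k / fact k" for k
  have "(\<Sum>j=1..r. alpha_coef r n j * (\<Sum>k<n. (deriv ^^ k) f x * (real j * t)^k / fact k))
      = (\<Sum>k<n. \<Sum>j=1..r. alpha_coef r n j * real j ^ k * ((deriv ^^ k) f x * t^k / fact k))"
    by (subst sum.swap) (simp add: sum_distrib_left power_mult_distrib algebra_simps)
  also have "\<dots> = (\<Sum>k<n. (\<Sum>j=1..r. alpha_coef r n j * real j ^ k) * ((deriv ^^ k) f x * t^k / fact k))"
    by (simp only: sum_distrib_right)
  also have "\<dots> = (\<Sum>k<n. c k)"
    by (simp add: c_def delta_coef_def mult_ac)
  also have "\<dots> = c 0 + (\<Sum>k=1..n. c k) - c n"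
    using sum.lessThan_Suc_shift[of c n] by (simp add: sum.atLeast1_atMost_eq)
  also have "c 0 = f x * (1 - alpha_coef r n 0)"
    by (simp add: c_def delta_coef_0)
  also have "c n = - ((-1)^r * (deriv ^^ n) f x * t^n / fact n)"
    by (simp add: c_def delta_coef_self[OF r])
  finally show ?thesis
    by (simp add: comb_remainder_def sum.atLeast_Suc_atMost c_def algebra_simps sum_subtractf)
qed

lemma has_integral_one_minus_power:
  assumes "n \<ge> 1"
  shows "((\<lambda>u::real. (1 - u)^(n-1)) has_integral 1 / real n) {0..1}"
proof -
  have "((\<lambda>u. -((1 - u)^n) / real n) has_real_derivative (1 - u)^(n-1)) (at u)" for u :: real
    using assms by (auto intro!: derivative_eq_intros)
  then have "((\<lambda>u::real. (1 - u)^(n-1)) has_integral (-((1 - 1)^n) / real n - (-((1 - 0)^n) / real n))) {0..1}"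
    by (intro fundamental_theorem_of_calculus)
       (auto simp: has_real_derivative_iff_has_vector_derivative[symmetric] has_field_derivative_at_within)
  then show ?thesis using assms by (simp add: power_0_left)
qed

lemma has_integral_comb_remainder:
  fixes f :: "real \<Rightarrow> real"
  assumes r: "r \<ge> 1" and n: "n \<ge> 1"
    and D: "\<And>k x. k < n \<Longrightarrow> ((deriv ^^ k) f has_real_derivative (deriv ^^ Suc k) f x) (at x)"
  shows "((\<lambda>u. t^n / fact (n-1) * ((1-u)^(n-1) * fdiff r (u * t) ((deriv ^^ n) f) x)) has_integral
           comb_remainder r n f x t) {0..1}"
proof -
  define g where "g = (deriv ^^ n) f"
  define h where "h j u = (real j * t)^n / fact (n-1) * ((1-u)^(n-1) * g (x + u * (real j * t)))" for j u
  have integrand: "t^n / fact (n-1) * ((1-u)^(n-1) * fdiff r (u * t) g x) =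
      (\<Sum>j=1..r. alpha_coef r n j * h j u) + (-1)^r * g x * t^n / fact (n-1) * (1-u)^(n-1)" for u
  proof -
    have "alpha_coef r n j * h j u
        = t^n / fact (n-1) * ((1-u)^(n-1) * ((-1)^(r-j) * real (r choose j) * g (x + real j * (u * t))))"
      if "j \<in> {1..r}" for j
      using that alpha_coef_mult_power[of j r n]
      by (simp add: h_def power_mult_distrib field_simps)
    moreover have "fdiff r (u * t) g x
        = (-1)^r * g x + (\<Sum>j=1..r. (-1)^(r-j) * real (r choose j) * g (x + real j * (u * t)))"
      by (simp add: fdiff_def sum.atLeast_Suc_atMost)
    ultimately show ?thesis by (simp add: sum_distrib_left algebra_simps)
  qed
  have HI: "((\<lambda>u. (\<Sum>j=1..r. alpha_coef r n j * h j u) + (-1)^r * g x * t^n / fact (n-1) * (1-u)^(n-1))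
      has_integral (\<Sum>j=1..r. alpha_coef r n j *
         (f (x + real j * t) - (\<Sum>k<n. (deriv ^^ k) f x * (real j * t)^k / fact k)))
        + (-1)^r * g x * t^n / fact (n-1) * (1 / real n)) {0..1}"
    unfolding h_def g_def
    by (intro has_integral_add has_integral_sum has_integral_mult_right
        has_integral_taylor_remainder[OF n D] has_integral_one_minus_power[OF n]) auto
  have "fact n = real n * fact (n-1)"
    using n by (cases n) simp_all
  then have "(-1)^r * g x * t^n / fact (n-1) * (1 / real n) = (-1)^r * (deriv ^^ n) f x * t^n / fact n"
    by (simp add: g_def)
  then have "((\<lambda>u. t^n / fact (n-1) * ((1-u)^(n-1) * fdiff r (u * t) g x)) has_integral
      comb_remainder r n f x t) {0..1}"
    using HI unfolding integrand comb_remainder_eq_taylor_remainders[OF r n] by simp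
  then show ?thesis by (simp add: g_def)
qed

section \<open>Estimates of the remainder\<close>

lemma comb_remainder_step_0:
  assumes "n \<ge> 1"
  shows "comb_remainder r n f x 0 = 0"
proof -
  have "(\<Sum>j=0..r. alpha_coef r n j) = 1"
    by (simp add: alpha_coef_def sum.atLeast_Suc_atMost)
  moreover have "(\<Sum>k=1..n. (deriv ^^ k) f x * 0^k * delta_coef r n k / fact k) = (0::real)"
    by (intro sum.neutral) auto
  ultimately show ?thesis by (simp add: comb_remainder_def flip: sum_distrib_right)
qed

lemma binomial_difference_quotient:
  fixes s :: real
  assumes "s \<noteq> 0"
  shows "((1 + s)^(r+1) - 1) / (real (r+1) * s) = (\<Sum>k=1..r+1. real ((r+1) choose k) * s^(k-1) / real (r+1))"
proof -
  have "(1 + s)^(r+1) = (\<Sum>k\<le>r+1. real ((r+1) choose k) * s^k)"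
    using binomial_ring[of s 1 "r+1"] by (simp add: add.commute)
  also have "\<dots> = 1 + (\<Sum>k=1..r+1. real ((r+1) choose k) * s^k)"
    by (simp add: atMost_atLeast0 sum.atLeast_Suc_atMost)
  finally have b: "(1 + s)^(r+1) - 1 = (\<Sum>k=1..r+1. real ((r+1) choose k) * s^k)"
    by simp
  have "((1 + s)^(r+1) - 1) / (real (r+1) * s) = (\<Sum>k=1..r+1. real ((r+1) choose k) * s^k / (real (r+1) * s))"
    unfolding b by (rule sum_divide_distrib)
  also have "\<dots> = (\<Sum>k=1..r+1. real ((r+1) choose k) * s^(k-1) / real (r+1))"
    using assms by (intro sum.cong refl) (auto simp: power_eq_if)
  finally show ?thesis .
qed

lemma nn_integral_one_plus_power:
  fixes s :: real
  assumes "s > 0"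
  shows "(\<integral>\<^sup>+u. ennreal (indicator {0..1} u * (1 + u * s)^r) \<partial>lborel) =
         ennreal (\<Sum>k=1..r+1. real ((r+1) choose k) * s^(k-1) / real (r+1))"
proof -
  define F where "F u = (1 + u * s)^(Suc r) / (real (Suc r) * s)" for u
  have "(F has_real_derivative (1 + u * s)^r) (at u)" for u
  proof -
    have "((\<lambda>u. 1 + u * s) has_real_derivative s) (at u)" by (auto intro!: derivative_eq_intros)
    from DERIV_cdivide[OF DERIV_power[OF this, of "Suc r"], of "real (Suc r) * s"]
    show ?thesis using assms by (simp add: F_def[abs_def])
  qed
  then have "((\<lambda>u. (1 + u * s)^r) has_integral F 1 - F 0) {0..1}"
    by (intro fundamental_theorem_of_calculus)
       (auto simp: has_real_derivative_iff_has_vector_derivative[symmetric] has_field_derivative_at_within)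
  moreover have "F 1 - F 0 = (\<Sum>k=1..r+1. real ((r+1) choose k) * s^(k-1) / real (r+1))"
    using binomial_difference_quotient[of s r] assms by (simp add: F_def diff_divide_distrib)
  ultimately show ?thesis
    using assms by (intro nn_integral_has_integral_lebesgue) auto
qed

lemma nn_integral_L1norm_fdiff_segment_le:
  assumes r: "r \<ge> 1" and xi: "xi > 0" and t: "t \<noteq> 0" and [measurable]: "g \<in> borel_measurable borel"
  shows "(\<integral>\<^sup>+u. ennreal (indicator {0..1} u) * L1norm (fdiff r (u * t) g) \<partial>lborel)
     \<le> ennreal (\<Sum>k=1..r+1. real ((r+1) choose k) * (\<bar>t\<bar>/xi)^(k-1) / real (r+1)) * omega1 r g xi"
proof -
  have "ennreal (indicator {0..1} u) * L1norm (fdiff r (u * t) g)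
      \<le> ennreal (indicator {0..1} u * (1 + u * (\<bar>t\<bar>/xi))^r) * omega1 r g xi" for u
  proof (cases "u \<in> {0..1}")
    case True
    then have "\<bar>u * t\<bar> / xi = u * (\<bar>t\<bar>/xi)" by (simp add: abs_mult)
    with True L1norm_fdiff_le_omega1[OF r xi, of g "u * t"] show ?thesis by simp
  qed simp
  then have "(\<integral>\<^sup>+u. ennreal (indicator {0..1} u) * L1norm (fdiff r (u * t) g) \<partial>lborel)
      \<le> (\<integral>\<^sup>+u. ennreal (indicator {0..1} u * (1 + u * (\<bar>t\<bar>/xi))^r) * omega1 r g xi \<partial>lborel)"
    by (intro nn_integral_mono)
  also have "\<dots> = ennreal (\<Sum>k=1..r+1. real ((r+1) choose k) * (\<bar>t\<bar>/xi)^(k-1) / real (r+1)) * omega1 r g xi"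
    using t xi nn_integral_one_plus_power[of "\<bar>t\<bar>/xi" r] by (simp add: nn_integral_multc)
  finally show ?thesis .
qed

lemma sum_even_terms:
  fixes G :: "nat \<Rightarrow> 'a::comm_monoid_add"
  shows "(\<Sum>k=1..n. if even k then G k else 0) = (\<Sum>m=1..n div 2. G (2*m))"
proof -
  have "(\<Sum>k=1..n. if even k then G k else 0) = (\<Sum>k\<in>{k\<in>{1..n}. even k}. G k)"
    using sum.inter_filter[of "{1..n}" G even] by simp
  also have "{k\<in>{1..n}. even k} = (\<lambda>m. 2*m) ` {1..n div 2}"
    by (auto elim!: evenE)
  also have "(\<Sum>k\<in>(\<lambda>m. 2*m) ` {1..n div 2}. G k) = (\<Sum>m=1..n div 2. G (2*m))"
    by (simp add: sum.reindex inj_on_def)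
  finally show ?thesis .
qed

text \<open>
  The weights of the bound \<open>||E(-,t)||_1 <= omega_r * sum_k w_k |t|^(n+k-1)\<close>;
  against the kernel each power becomes a moment.
\<close>
definition remainder_weight :: "nat \<Rightarrow> nat \<Rightarrow> real \<Rightarrow> nat \<Rightarrow> real" where
  "remainder_weight r n xi k = real ((r+1) choose k) / (real (r+1) * fact (n-1) * xi^(k-1))"

lemma sum_remainder_weight:
  assumes "xi > 0"
  shows "\<bar>t\<bar>^n / fact (n-1) * (\<Sum>k=1..r+1. real ((r+1) choose k) * (\<bar>t\<bar>/xi)^(k-1) / real (r+1))
     = (\<Sum>k=1..r+1. remainder_weight r n xi k * \<bar>t\<bar>^(n+k-1))"
  unfolding sum_distrib_left
proof (intro sum.cong refl)
  fix k assume "k \<in> {1..r+1}"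
  then have "\<bar>t\<bar>^(n+k-1) = \<bar>t\<bar>^n * \<bar>t\<bar>^(k-1)" by (simp flip: power_add)
  then show "\<bar>t\<bar>^n / fact (n-1) * (real ((r+1) choose k) * (\<bar>t\<bar>/xi)^(k-1) / real (r+1))
      = remainder_weight r n xi k * \<bar>t\<bar>^(n+k-1)"
    using assms by (simp add: remainder_weight_def power_divide field_simps)
qed

lemma tendsto_at_right_0_ennreal_le:
  fixes F :: "real \<Rightarrow> ennreal" and h :: "real \<Rightarrow> real"
  assumes "\<And>xi. xi > 0 \<Longrightarrow> F xi \<le> ennreal (h xi)" and "(h \<longlongrightarrow> 0) (at_right 0)"
  shows "(F \<longlongrightarrow> 0) (at_right 0)"
proof (rule tendsto_sandwich[of "\<lambda>_. 0" F _ "\<lambda>xi. ennreal (h xi)"])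
  show "\<forall>\<^sub>F xi in at_right 0. F xi \<le> ennreal (h xi)"
    using eventually_at_right_less[of 0] by eventually_elim (rule assms(1))
  show "((\<lambda>xi. ennreal (h xi)) \<longlongrightarrow> 0) (at_right 0)"
    using tendsto_ennrealI[OF assms(2)] by simp
qed auto

definition correction_coef :: "nat \<Rightarrow> nat \<Rightarrow> nat \<Rightarrow> real \<Rightarrow> nat \<Rightarrow> real" where
  "correction_coef r n al be m = delta_coef r n (2*m) / fact (2*m) * gamma_ratio al be (2*m+1)"

lemma Delta_op_eq:
  "Delta_op r n al be xi f x = M_op r n al be xi f x - f x
     - (\<Sum>m=1..n div 2. correction_coef r n al be m * xi^(2*m) * (deriv ^^ (2*m)) f x)"
  by (simp add: Delta_op_def correction_coef_def gamma_ratio_def mult_ac)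

text \<open>A measurable pointwise bound for \<open>|Delta|\<close>.\<close>
definition Delta_majorant :: "nat \<Rightarrow> nat \<Rightarrow> nat \<Rightarrow> real \<Rightarrow> real \<Rightarrow> (real \<Rightarrow> real) \<Rightarrow> real \<Rightarrow> ennreal" where
  "Delta_majorant r n al be xi f x = ennreal (W_const al be xi) *
     (\<integral>\<^sup>+t. ennreal (\<bar>comb_remainder r n f x t\<bar> / kernel_den al be xi t) \<partial>lborel)"

context
  fixes f :: "real \<Rightarrow> real" and n :: nat
  assumes n_pos: "n \<ge> 1"
    and has_deriv: "\<And>k x. k < n \<Longrightarrow> ((deriv ^^ k) f has_real_derivative (deriv ^^ Suc k) f x) (at x)"
    and continuous_deriv_n: "continuous_on UNIV ((deriv ^^ n) f)"
begin

lemma deriv_iter_measurable: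
  assumes "k \<le> n"
  shows "(deriv ^^ k) f \<in> borel_measurable borel"
proof (intro borel_measurable_continuous_onI)
  show "continuous_on UNIV ((deriv ^^ k) f)"
  proof (cases "k = n")
    case False
    with assms have "k < n" by simp
    then show ?thesis
      using DERIV_isCont[OF has_deriv] by (intro continuous_at_imp_continuous_on) auto
  qed (use continuous_deriv_n in simp)
qed

lemma comb_remainder_measurable:
  "(\<lambda>p. comb_remainder r n f (fst p) (snd p)) \<in> borel_measurable (lborel \<Otimes>\<^sub>M lborel)"
proof -
  \<comment> \<open>derivatives beyond order \<open>n\<close> do not occur, but need not be measurable\<close>
  define F where "F k = (if k \<le> n then (deriv ^^ k) f else (\<lambda>_. 0))" for k
  have [measurable]: "F k \<in> borel_measurable borel" for k
    by (simp add: F_def deriv_iter_measurable)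
  have "comb_remainder r n f x t = (\<Sum>j=0..r. alpha_coef r n j * F 0 (x + real j * t)) - F 0 x
     - (\<Sum>k=1..n. F k x * t^k * delta_coef r n k / fact k)" for x t
    unfolding comb_remainder_def F_def by simp
  then show ?thesis by simp
qed

lemma comb_remainder_measurable_step: "comb_remainder r n f x \<in> borel_measurable borel"
  using measurable_Pair2[OF comb_remainder_measurable, of x] by simp

lemma comb_remainder_measurable_point: "(\<lambda>x. comb_remainder r n f x t) \<in> borel_measurable borel"
  using measurable_Pair1[OF comb_remainder_measurable, of t] by simp

lemma comb_remainder_kernel_measurable:
  "case_prod (\<lambda>x t. ennreal (\<bar>comb_remainder r n f x t\<bar> / kernel_den al be xi t))
     \<in> borel_measurable (lborel \<Otimes>\<^sub>M lborel)"
  using comb_remainder_measurable[of r] by measurable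

lemma Delta_majorant_measurable: "Delta_majorant r n al be xi f \<in> borel_measurable lborel"
  using comb_remainder_kernel_measurable unfolding Delta_majorant_def[abs_def] by measurable

lemma abs_comb_remainder_le:
  assumes r: "r \<ge> 1"
  shows "ennreal \<bar>comb_remainder r n f x t\<bar> \<le> ennreal (\<bar>t\<bar>^n / fact (n-1)) *
           (\<integral>\<^sup>+u. ennreal (indicator {0..1} u * \<bar>fdiff r (u * t) ((deriv ^^ n) f) x\<bar>) \<partial>lborel)"
proof -
  define phi where "phi u = (1-u)^(n-1) * fdiff r (u * t) ((deriv ^^ n) f) x" for u
  define psi where "psi u = \<bar>fdiff r (u * t) ((deriv ^^ n) f) x\<bar>" for u
  have phi: "phi integrable_on {0..1}" and psi: "psi integrable_on {0..1}"
    unfolding phi_def psi_def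
    by (intro integrable_continuous_interval continuous_intros continuous_on_fdiff_step continuous_deriv_n)+
  have "((\<lambda>u. t^n / fact (n-1) * phi u) has_integral t^n / fact (n-1) * integral {0..1} phi) {0..1}"
    by (intro has_integral_mult_right integrable_integral phi)
  then have "comb_remainder r n f x t = t^n / fact (n-1) * integral {0..1} phi"
    using has_integral_comb_remainder[OF r n_pos has_deriv, of t x] has_integral_unique
    unfolding phi_def by blast
  moreover have "\<bar>integral {0..1} phi\<bar> \<le> integral {0..1} psi"
  proof -
    have "\<bar>phi u\<bar> \<le> psi u" if "u \<in> {0..1}" for u
    proof -
      have "\<bar>(1 - u)^(n-1)\<bar> \<le> 1" using that by (simp add: power_le_one)
      then show ?thesis by (simp add: phi_def psi_def abs_mult mult_left_le_one_le)
    qed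
    then show ?thesis using integral_norm_bound_integral[OF phi psi] by simp
  qed
  ultimately have "\<bar>comb_remainder r n f x t\<bar> \<le> \<bar>t\<bar>^n / fact (n-1) * integral {0..1} psi"
    by (auto simp: abs_mult power_abs intro!: divide_right_mono mult_left_mono)
  also have "ennreal (\<bar>t\<bar>^n / fact (n-1) * integral {0..1} psi)
      = ennreal (\<bar>t\<bar>^n / fact (n-1)) * (\<integral>\<^sup>+u. ennreal (indicator {0..1} u * psi u) \<partial>lborel)"
  proof -
    have "ennreal (integral {0..1} psi) = (\<integral>\<^sup>+u. ennreal (indicator {0..1} u * psi u) \<partial>lborel)"
      by (rule nn_integral_has_integral_lebesgue[symmetric, OF _ integrable_integral[OF psi]])
         (simp add: psi_def)
    then show ?thesis
      by (metis ennreal_mult integral_nonneg[OF psi] abs_ge_zero divide_nonneg_nonneg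
          fact_ge_zero psi_def zero_le_power)
  qed
  finally show ?thesis by (simp add: ennreal_leI psi_def)
qed

lemma L1norm_comb_remainder_le:
  assumes r: "r \<ge> 1" and xi: "xi > 0"
  shows "L1norm (\<lambda>x. comb_remainder r n f x t)
     \<le> omega1 r ((deriv ^^ n) f) xi * ennreal (\<Sum>k=1..r+1. remainder_weight r n xi k * \<bar>t\<bar>^(n+k-1))"
proof (cases "t = 0")
  case True
  then show ?thesis by (simp add: comb_remainder_step_0[OF n_pos] L1norm_def)
next
  case False
  define g where "g = (deriv ^^ n) f"
  define A where "A = \<bar>t\<bar>^n / fact (n-1)"
  define P where "P = (\<Sum>k=1..r+1. real ((r+1) choose k) * (\<bar>t\<bar>/xi)^(k-1) / real (r+1))"
  have [measurable]: "g \<in> borel_measurable borel"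
    unfolding g_def by (rule deriv_iter_measurable) simp
  have [measurable]: "(\<lambda>(x, u). ennreal (indicator {0..1} u * \<bar>fdiff r (u * t) g x\<bar>))
      \<in> borel_measurable (lborel \<Otimes>\<^sub>M lborel)"
    unfolding fdiff_def by measurable
  have "L1norm (\<lambda>x. comb_remainder r n f x t)
      \<le> (\<integral>\<^sup>+x. ennreal A * (\<integral>\<^sup>+u. ennreal (indicator {0..1} u * \<bar>fdiff r (u * t) g x\<bar>) \<partial>lborel) \<partial>lborel)"
    unfolding L1norm_def A_def g_def by (intro nn_integral_mono abs_comb_remainder_le[OF r])
  also have "\<dots> = ennreal A * (\<integral>\<^sup>+u. (\<integral>\<^sup>+x. ennreal (indicator {0..1} u * \<bar>fdiff r (u * t) g x\<bar>) \<partial>lborel) \<partial>lborel)"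
    by (subst lborel_pair.Fubini') (simp_all add: nn_integral_cmult)
  also have "(\<integral>\<^sup>+u. (\<integral>\<^sup>+x. ennreal (indicator {0..1} u * \<bar>fdiff r (u * t) g x\<bar>) \<partial>lborel) \<partial>lborel)
      = (\<integral>\<^sup>+u. ennreal (indicator {0..1} u) * L1norm (fdiff r (u * t) g) \<partial>lborel)"
    unfolding L1norm_def by (intro nn_integral_cong) (simp add: ennreal_mult nn_integral_cmult)
  also have "\<dots> \<le> ennreal P * omega1 r g xi"
    unfolding P_def by (rule nn_integral_L1norm_fdiff_segment_le[OF r xi False]) simp
  also have "ennreal A * (ennreal P * omega1 r g xi) = omega1 r g xi * ennreal (A * P)"
    by (subst ennreal_mult') (simp_all add: A_def ac_simps)
  finally show ?thesis
    using sum_remainder_weight[OF xi, of t n r] by (simp add: A_def P_def g_def mult_left_mono)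
qed

context
  fixes r al :: nat and be :: real
  assumes r_pos: "r \<ge> 1" and al_pos: "al \<ge> 1"
    and be_gt: "be > real (n + r + 1) / (2 * real al)"
begin

lemma be_gt_moment_index:
  assumes "k \<le> n + r"
  shows "be > real (k+1) / (2 * real al)"
proof -
  have "real (k+1) / (2 * real al) \<le> real (n + r + 1) / (2 * real al)"
    using assms by (intro divide_right_mono) auto
  then show ?thesis using be_gt by linarith
qed

lemma be_gt_base: "be > 1 / (2 * real al)"
  using be_gt_moment_index[of 0] by simp

lemma integral_comb_over_kernel:
  assumes xi: "xi > 0"
    and int: "integrable lborel (\<lambda>t. comb_remainder r n f x t / kernel_den al be xi t)"
  shows "(LINT t|lborel. (\<Sum>j=0..r. alpha_coef r n j * f (x + real j * t)) / kernel_den al be xi t)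
     = (LINT t|lborel. comb_remainder r n f x t / kernel_den al be xi t)
       + f x * (LINT t|lborel. t^0 / kernel_den al be xi t)
       + (\<Sum>k=1..n. (deriv ^^ k) f x * delta_coef r n k / fact k * (LINT t|lborel. t^k / kernel_den al be xi t))"
proof -
  define K where "K = kernel_den al be xi"
  define c where "c k = (deriv ^^ k) f x * delta_coef r n k / fact k" for k
  have int_moment: "integrable lborel (\<lambda>t. t^k / K t)" if "k \<le> n" for k
    unfolding K_def using that by (intro kernel_moment_integrable al_pos xi be_gt_moment_index) simp
  have split: "(\<Sum>j=0..r. alpha_coef r n j * f (x + real j * t)) / K t =
      (comb_remainder r n f x t / K t + f x * (t^0 / K t)) + (\<Sum>k=1..n. c k * (t^k / K t))" for t
  proof -
    have "(\<Sum>k=1..n. (deriv ^^ k) f x * t^k * delta_coef r n k / fact k) / K t = (\<Sum>k=1..n. c k * (t^k / K t))"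
      by (simp add: sum_divide_distrib c_def mult_ac)
    then show ?thesis by (simp add: comb_remainder_def add_divide_distrib diff_divide_distrib)
  qed
  have int_0: "integrable lborel (\<lambda>t. f x * (t^0 / K t))"
    by (intro integrable_mult_right int_moment) simp
  have int_head: "integrable lborel (\<lambda>t. comb_remainder r n f x t / K t + f x * (t^0 / K t))"
    using int[folded K_def] int_0 by (rule Bochner_Integration.integrable_add)
  have int_tail: "integrable lborel (\<lambda>t. \<Sum>k=1..n. c k * (t^k / K t))"
    using int_moment by (intro Bochner_Integration.integrable_sum integrable_mult_right) auto
  have I_head: "(LINT t|lborel. comb_remainder r n f x t / K t + f x * (t^0 / K t))
      = (LINT t|lborel. comb_remainder r n f x t / K t) + f x * (LINT t|lborel. t^0 / K t)"
    unfolding Bochner_Integration.integral_add[OF int[folded K_def] int_0] integral_mult_right_zero ..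
  have I_tail: "(LINT t|lborel. (\<Sum>k=1..n. c k * (t^k / K t))) = (\<Sum>k=1..n. c k * (LINT t|lborel. t^k / K t))"
    unfolding integral_mult_right_zero[symmetric]
    by (rule Bochner_Integration.integral_sum) (intro integrable_mult_right int_moment, simp)
  show ?thesis
    unfolding K_def[symmetric] c_def[symmetric] split Bochner_Integration.integral_add[OF int_head int_tail]
      I_head I_tail ..
qed

text \<open>Odd kernel moments vanish; the even ones reproduce the correction terms of \<open>Delta_op\<close>.\<close>
lemma Delta_op_eq_integral:
  assumes xi: "xi > 0"
    and int: "integrable lborel (\<lambda>t. comb_remainder r n f x t / kernel_den al be xi t)"
  shows "Delta_op r n al be xi f x = W_const al be xi * (LINT t|lborel. comb_remainder r n f x t / kernel_den al be xi t)"
proof -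
  define K where "K = kernel_den al be xi"
  define W where "W = W_const al be xi"
  define c where "c k = (deriv ^^ k) f x * delta_coef r n k / fact k" for k
  have moment: "W * (LINT t|lborel. t^k / K t) = (if even k then xi^k * gamma_ratio al be (k+1) else 0)"
    if "k \<le> n" for k
    using that integral_kernel_moment[OF al_pos xi be_gt_moment_index, of k]
      W_const_mult_kernel_moment[OF al_pos xi be_gt_moment_index, of k]
    by (simp add: K_def W_def)
  have "M_op r n al be xi f x = W * (LINT t|lborel. (\<Sum>j=0..r. alpha_coef r n j * f (x + real j * t)) / K t)"
    by (simp add: M_op_def W_def K_def kernel_den_def)
  also have "\<dots> = W * (LINT t|lborel. comb_remainder r n f x t / K t)
      + f x * (W * (LINT t|lborel. t^0 / K t)) + (\<Sum>k=1..n. c k * (W * (LINT t|lborel. t^k / K t)))"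
    unfolding K_def integral_comb_over_kernel[OF xi int]
    by (simp add: c_def distrib_left sum_distrib_left mult_ac)
  also have "(\<Sum>k=1..n. c k * (W * (LINT t|lborel. t^k / K t)))
      = (\<Sum>k=1..n. if even k then c k * (xi^k * gamma_ratio al be (k+1)) else 0)"
    by (intro sum.cong refl) (simp add: moment)
  also have "\<dots> = (\<Sum>m=1..n div 2. c (2*m) * (xi^(2*m) * gamma_ratio al be (2*m+1)))"
    by (rule sum_even_terms)
  finally show ?thesis
    using moment[of 0] gamma_ratio_1[OF al_pos] be_gt_moment_index[of 0]
    by (simp add: Delta_op_eq correction_coef_def c_def W_def K_def mult_ac)
qed

lemma abs_Delta_op_le:
  assumes xi: "xi > 0"
  shows "ennreal \<bar>Delta_op r n al be xi f x\<bar> \<le> Delta_majorant r n al be xi f x"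
proof -
  define E where "E t = comb_remainder r n f x t / kernel_den al be xi t" for t
  have W: "W_const al be xi > 0"
    using W_const_pos[OF al_pos xi be_gt_base] .
  have norm_E: "ennreal (norm (E t)) = ennreal (\<bar>comb_remainder r n f x t\<bar> / kernel_den al be xi t)" for t
    using kernel_den_pos[OF xi] by (simp add: E_def abs_of_pos)
  show ?thesis
  proof (cases "integrable lborel E")
    case True
    have "ennreal \<bar>Delta_op r n al be xi f x\<bar> = ennreal (W_const al be xi) * ennreal (norm (LINT t|lborel. E t))"
      using Delta_op_eq_integral[OF xi True[unfolded E_def]] W by (simp add: E_def abs_mult ennreal_mult)
    also have "\<dots> \<le> ennreal (W_const al be xi) * (\<integral>\<^sup>+t. ennreal (norm (E t)) \<partial>lborel)"
      by (intro mult_left_mono integral_norm_bound_ennreal True) simp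
    finally show ?thesis unfolding norm_E Delta_majorant_def .
  next
    case False
    have "E \<in> borel_measurable lborel"
      using comb_remainder_measurable_step[of r x] unfolding E_def by measurable
    then have "\<not> (\<integral>\<^sup>+t. ennreal (norm (E t)) \<partial>lborel) < \<infinity>"
      using False integrableI_bounded[of E lborel] by blast
    then have "(\<integral>\<^sup>+t. ennreal (norm (E t)) \<partial>lborel) = \<infinity>"
      by (simp flip: less_top)
    then show ?thesis using W unfolding norm_E Delta_majorant_def by simp
  qed
qed

lemma W_const_mult_remainder_moments:
  assumes xi: "xi > 0"
  shows "W_const al be xi * (\<Sum>k=1..r+1. remainder_weight r n xi k * kernel_moment al be xi (n+k-1))
     = bound_const r n al be * xi^n"
proof -
  have cancel: "c / (d * y) * (x * y * g) = c * g / d * x" if "y \<noteq> 0" for c d x y g :: real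
    using that by (cases "d = 0") (simp_all add: field_simps)
  have "W_const al be xi * (remainder_weight r n xi k * kernel_moment al be xi (n+k-1))
      = real ((r+1) choose k) * gamma_ratio al be (n+k) / (real (r+1) * fact (n-1)) * xi^n"
    if "k \<in> {1..r+1}" for k
  proof -
    have "n + k - 1 \<le> n + r" using that by auto
    then have "W_const al be xi * kernel_moment al be xi (n+k-1) = xi^(n+k-1) * gamma_ratio al be (n+k)"
      using that W_const_mult_kernel_moment[OF al_pos xi be_gt_moment_index] by auto
    also have "xi^(n+k-1) = xi^n * xi^(k-1)"
      using that by (simp flip: power_add)
    finally have "W_const al be xi * (remainder_weight r n xi k * kernel_moment al be xi (n+k-1))
        = remainder_weight r n xi k * (xi^n * xi^(k-1) * gamma_ratio al be (n+k))"
      unfolding mult.left_commute[of "W_const al be xi" "remainder_weight r n xi k"] by simp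
    then show ?thesis
      using xi by (simp add: remainder_weight_def cancel)
  qed
  then have "W_const al be xi * (\<Sum>k=1..r+1. remainder_weight r n xi k * kernel_moment al be xi (n+k-1))
      = (\<Sum>k=1..r+1. real ((r+1) choose k) * gamma_ratio al be (n+k) / (real (r+1) * fact (n-1)) * xi^n)"
    unfolding sum_distrib_left by (rule sum.cong[OF refl])
  also have "\<dots> = bound_const r n al be * xi^n"
    by (simp only: bound_const_eq sum_distrib_right sum_divide_distrib)
  finally show ?thesis .
qed

lemma nn_integral_comb_remainder_kernel_le:
  assumes xi: "xi > 0"
  shows "(\<integral>\<^sup>+t. (\<integral>\<^sup>+x. ennreal (\<bar>comb_remainder r n f x t\<bar> / kernel_den al be xi t) \<partial>lborel) \<partial>lborel)
     \<le> omega1 r ((deriv ^^ n) f) xi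
        * ennreal (\<Sum>k=1..r+1. remainder_weight r n xi k * kernel_moment al be xi (n+k-1))"
proof -
  define K where "K = kernel_den al be xi"
  define w where "w = remainder_weight r n xi"
  have K: "K t > 0" for t unfolding K_def by (rule kernel_den_pos[OF xi])
  have inner: "(\<integral>\<^sup>+x. ennreal (\<bar>comb_remainder r n f x t\<bar> / K t) \<partial>lborel)
      \<le> omega1 r ((deriv ^^ n) f) xi * ennreal (\<Sum>k=1..r+1. w k * (\<bar>t\<bar>^(n+k-1) / K t))" for t
  proof -
    have "(\<integral>\<^sup>+x. ennreal (\<bar>comb_remainder r n f x t\<bar> / K t) \<partial>lborel)
        = (\<integral>\<^sup>+x. ennreal (1 / K t) * ennreal \<bar>comb_remainder r n f x t\<bar> \<partial>lborel)"
      using K[of t] by (intro nn_integral_cong, subst ennreal_mult[symmetric]) auto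
    also have "\<dots> = ennreal (1 / K t) * L1norm (\<lambda>x. comb_remainder r n f x t)"
      unfolding L1norm_def using comb_remainder_measurable_point[of r t]
      by (intro nn_integral_cmult) measurable
    also have "\<dots> \<le> ennreal (1 / K t) *
        (omega1 r ((deriv ^^ n) f) xi * ennreal (\<Sum>k=1..r+1. w k * \<bar>t\<bar>^(n+k-1)))"
      unfolding w_def by (intro mult_left_mono L1norm_comb_remainder_le[OF r_pos xi]) simp
    also have "\<dots> = omega1 r ((deriv ^^ n) f) xi * ennreal (1 / K t * (\<Sum>k=1..r+1. w k * \<bar>t\<bar>^(n+k-1)))"
      using K[of t] by (subst ennreal_mult') (simp_all add: ac_simps)
    also have "1 / K t * (\<Sum>k=1..r+1. w k * \<bar>t\<bar>^(n+k-1)) = (\<Sum>k=1..r+1. w k * (\<bar>t\<bar>^(n+k-1) / K t))"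
      unfolding sum_distrib_left by (simp add: ac_simps)
    finally show ?thesis .
  qed
  have "(\<integral>\<^sup>+t. (\<integral>\<^sup>+x. ennreal (\<bar>comb_remainder r n f x t\<bar> / K t) \<partial>lborel) \<partial>lborel)
      \<le> (\<integral>\<^sup>+t. omega1 r ((deriv ^^ n) f) xi * ennreal (\<Sum>k=1..r+1. w k * (\<bar>t\<bar>^(n+k-1) / K t)) \<partial>lborel)"
    by (intro nn_integral_mono inner)
  also have "\<dots> = omega1 r ((deriv ^^ n) f) xi * (\<integral>\<^sup>+t. ennreal (\<Sum>k=1..r+1. w k * (\<bar>t\<bar>^(n+k-1) / K t)) \<partial>lborel)"
    unfolding K_def by (rule nn_integral_cmult) measurable
  also have "(\<integral>\<^sup>+t. ennreal (\<Sum>k=1..r+1. w k * (\<bar>t\<bar>^(n+k-1) / K t)) \<partial>lborel)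
      = ennreal (\<Sum>k=1..r+1. w k * kernel_moment al be xi (n+k-1))"
    unfolding K_def using xi
    by (intro nn_integral_kernel_moment_sum al_pos xi be_gt_moment_index)
       (auto simp: w_def remainder_weight_def)
  finally show ?thesis by (simp add: K_def w_def)
qed


lemma nn_integral_Delta_majorant_le:
  assumes xi: "xi > 0"
  shows "(\<integral>\<^sup>+x. Delta_majorant r n al be xi f x \<partial>lborel)
     \<le> ennreal (bound_const r n al be) * omega1 r ((deriv ^^ n) f) xi * ennreal (xi ^ n)"
proof -
  define W where "W = W_const al be xi"
  define S where "S = (\<Sum>k=1..r+1. remainder_weight r n xi k * kernel_moment al be xi (n+k-1))"
  have W: "W > 0" unfolding W_def by (rule W_const_pos[OF al_pos xi be_gt_base])
  note [measurable] = comb_remainder_kernel_measurable[of r al be xi]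
  have "(\<integral>\<^sup>+x. Delta_majorant r n al be xi f x \<partial>lborel)
      = ennreal W * (\<integral>\<^sup>+t. (\<integral>\<^sup>+x. ennreal (\<bar>comb_remainder r n f x t\<bar> / kernel_den al be xi t) \<partial>lborel) \<partial>lborel)"
    unfolding Delta_majorant_def W_def by (subst lborel_pair.Fubini') (simp_all add: nn_integral_cmult)
  also have "\<dots> \<le> ennreal W * (omega1 r ((deriv ^^ n) f) xi * ennreal S)"
    unfolding S_def by (intro mult_left_mono nn_integral_comb_remainder_kernel_le xi) simp
  also have "\<dots> = omega1 r ((deriv ^^ n) f) xi * ennreal (W * S)"
    using W by (subst ennreal_mult') (simp_all add: ac_simps)
  also have "W * S = bound_const r n al be * xi^n"
    unfolding W_def S_def by (rule W_const_mult_remainder_moments[OF xi])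
  also have "ennreal (bound_const r n al be * xi^n) = ennreal (bound_const r n al be) * ennreal (xi^n)"
    using xi by (simp add: ennreal_mult'')
  finally show ?thesis
    by (simp only: ac_simps)
qed

lemma L1norm_Delta_op_le_majorant:
  assumes "xi > 0"
  shows "L1norm (Delta_op r n al be xi f) \<le> (\<integral>\<^sup>+x. Delta_majorant r n al be xi f x \<partial>lborel)"
  unfolding L1norm_def by (intro nn_integral_mono abs_Delta_op_le assms)

lemma L1norm_Delta_op_le:
  assumes "xi > 0"
  shows "L1norm (Delta_op r n al be xi f)
     \<le> ennreal (bound_const r n al be) * omega1 r ((deriv ^^ n) f) xi * ennreal (xi ^ n)"
  using L1norm_Delta_op_le_majorant[OF assms] nn_integral_Delta_majorant_le[OF assms] by (rule order_trans)

lemma bound_const_nonneg: "bound_const r n al be \<ge> 0"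
proof -
  have "gamma_ratio al be (n+k) \<ge> 0" if "k \<in> {1..r+1}" for k
  proof -
    have "be > real (n + k - 1 + 1) / (2 * real al)"
      using that by (intro be_gt_moment_index) auto
    then show ?thesis
      using that al_pos be_gt_base by (auto simp: gamma_ratio_def intro!: less_imp_le[OF Gamma_real_pos])
  qed
  then show ?thesis
    unfolding bound_const_eq by (intro divide_nonneg_nonneg sum_nonneg mult_nonneg_nonneg) auto
qed

lemma nn_integral_Delta_majorant_le_L1norm:
  assumes xi: "xi > 0" and int: "integrable lborel ((deriv ^^ n) f)"
  shows "(\<integral>\<^sup>+x. Delta_majorant r n al be xi f x \<partial>lborel)
     \<le> ennreal (bound_const r n al be * 2^r * (LINT x|lborel. \<bar>(deriv ^^ n) f x\<bar>) * xi^n)"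
proof -
  define B where "B = (LINT x|lborel. \<bar>(deriv ^^ n) f x\<bar>)"
  have B: "B \<ge> 0" unfolding B_def by (rule integral_nonneg_AE) auto
  have "omega1 r ((deriv ^^ n) f) xi \<le> ennreal (2^r) * ennreal B"
    using omega1_le_L1norm[OF deriv_iter_measurable[OF order_refl]] L1norm_eq_integral[OF int]
    by (simp add: B_def)
  then have "ennreal (bound_const r n al be) * omega1 r ((deriv ^^ n) f) xi * ennreal (xi ^ n)
      \<le> ennreal (bound_const r n al be) * (ennreal (2^r) * ennreal B) * ennreal (xi ^ n)"
    by (intro mult_right_mono mult_left_mono) auto
  also have "\<dots> = ennreal (bound_const r n al be * 2^r * B * xi^n)"
    using B xi bound_const_nonneg by (simp add: ennreal_mult ac_simps)
  finally show ?thesis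
    using nn_integral_Delta_majorant_le[OF xi] by (simp add: B_def)
qed

lemma tendsto_L1norm_Delta_op:
  assumes "integrable lborel ((deriv ^^ n) f)"
  shows "((\<lambda>xi. L1norm (Delta_op r n al be xi f)) \<longlongrightarrow> 0) (at_right 0)"
proof (rule tendsto_at_right_0_ennreal_le)
  fix xi :: real assume "xi > 0"
  have "L1norm (Delta_op r n al be xi f) \<le> (\<integral>\<^sup>+x. Delta_majorant r n al be xi f x \<partial>lborel)"
    by (rule L1norm_Delta_op_le_majorant[OF \<open>xi > 0\<close>])
  also have "\<dots> \<le> ennreal (bound_const r n al be * 2^r * (LINT x|lborel. \<bar>(deriv ^^ n) f x\<bar>) * xi^n)"
    by (rule nn_integral_Delta_majorant_le_L1norm[OF \<open>xi > 0\<close> assms])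
  finally show "L1norm (Delta_op r n al be xi f)
      \<le> ennreal (bound_const r n al be * 2^r * (LINT x|lborel. \<bar>(deriv ^^ n) f x\<bar>) * xi^n)" .
next
  show "((\<lambda>xi. bound_const r n al be * 2^r * (LINT x|lborel. \<bar>(deriv ^^ n) f x\<bar>) * xi^n) \<longlongrightarrow> 0) (at_right 0)"
    using n_pos by (auto intro!: tendsto_eq_intros simp: power_0_left)
qed

lemma abs_M_op_sub_le:
  assumes "xi > 0"
  shows "ennreal \<bar>M_op r n al be xi f x - f x\<bar> \<le> Delta_majorant r n al be xi f x
     + (\<Sum>m=1..n div 2. ennreal (\<bar>correction_coef r n al be m\<bar> * xi^(2*m)) * ennreal \<bar>(deriv ^^ (2*m)) f x\<bar>)"
proof -
  define S where "S = (\<Sum>m=1..n div 2. correction_coef r n al be m * xi^(2*m) * (deriv ^^ (2*m)) f x)"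
  define T where "T = (\<Sum>m=1..n div 2. \<bar>correction_coef r n al be m\<bar> * xi^(2*m) * \<bar>(deriv ^^ (2*m)) f x\<bar>)"
  have "\<bar>S\<bar> \<le> T"
    unfolding S_def T_def by (rule order_trans[OF sum_abs], rule sum_mono) (use assms in \<open>simp add: abs_mult\<close>)
  then have "\<bar>M_op r n al be xi f x - f x\<bar> \<le> \<bar>Delta_op r n al be xi f x\<bar> + T"
    using abs_triangle_ineq[of "Delta_op r n al be xi f x" S] by (simp add: Delta_op_eq S_def)
  moreover have "T \<ge> 0"
    unfolding T_def using assms by (intro sum_nonneg) simp
  ultimately have "ennreal \<bar>M_op r n al be xi f x - f x\<bar> \<le> ennreal \<bar>Delta_op r n al be xi f x\<bar> + ennreal T"
    by (simp add: ennreal_leI flip: ennreal_plus)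
  also have "ennreal T
      = (\<Sum>m=1..n div 2. ennreal (\<bar>correction_coef r n al be m\<bar> * xi^(2*m)) * ennreal \<bar>(deriv ^^ (2*m)) f x\<bar>)"
    unfolding T_def using assms by (subst sum_ennreal[symmetric]) (simp_all add: ennreal_mult)
  also have "ennreal \<bar>Delta_op r n al be xi f x\<bar> \<le> Delta_majorant r n al be xi f x"
    by (rule abs_Delta_op_le[OF assms])
  finally show ?thesis by (simp add: add_right_mono)
qed

lemma L1norm_M_op_sub_le:
  assumes xi: "xi > 0"
  shows "L1norm (\<lambda>x. M_op r n al be xi f x - f x) \<le> (\<integral>\<^sup>+x. Delta_majorant r n al be xi f x \<partial>lborel)
     + (\<Sum>m=1..n div 2. ennreal (\<bar>correction_coef r n al be m\<bar> * xi^(2*m)) * L1norm ((deriv ^^ (2*m)) f))"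
proof -
  define T where "T m x = ennreal (\<bar>correction_coef r n al be m\<bar> * xi^(2*m)) * ennreal \<bar>(deriv ^^ (2*m)) f x\<bar>"
    for m x
  have [measurable]: "(deriv ^^ (2*m)) f \<in> borel_measurable borel" if "m \<in> {1..n div 2}" for m
    using that deriv_iter_measurable[of "2*m"] by auto
  then have T_measurable: "T m \<in> borel_measurable borel" if "m \<in> {1..n div 2}" for m
    using that unfolding T_def by measurable
  have "L1norm (\<lambda>x. M_op r n al be xi f x - f x)
      \<le> (\<integral>\<^sup>+x. Delta_majorant r n al be xi f x + (\<Sum>m=1..n div 2. T m x) \<partial>lborel)"
    unfolding L1norm_def T_def by (intro nn_integral_mono abs_M_op_sub_le xi)
  also have "\<dots> = (\<integral>\<^sup>+x. Delta_majorant r n al be xi f x \<partial>lborel) + (\<Sum>m=1..n div 2. (\<integral>\<^sup>+x. T m x \<partial>lborel))"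
  proof -
    have "(\<lambda>x. \<Sum>m=1..n div 2. T m x) \<in> borel_measurable borel"
      using T_measurable by (simp add: borel_measurable_sum)
    moreover have "(\<integral>\<^sup>+x. (\<Sum>m=1..n div 2. T m x) \<partial>lborel) = (\<Sum>m=1..n div 2. (\<integral>\<^sup>+x. T m x \<partial>lborel))"
      by (rule nn_integral_sum) (simp_all add: T_measurable)
    ultimately show ?thesis
      using Delta_majorant_measurable by (subst nn_integral_add) simp_all
  qed
  also have "(\<Sum>m=1..n div 2. (\<integral>\<^sup>+x. T m x \<partial>lborel))
      = (\<Sum>m=1..n div 2. ennreal (\<bar>correction_coef r n al be m\<bar> * xi^(2*m)) * L1norm ((deriv ^^ (2*m)) f))"
    using \<open>\<And>m. m \<in> {1..n div 2} \<Longrightarrow> (deriv ^^ (2*m)) f \<in> borel_measurable borel\<close>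
    unfolding T_def L1norm_def by (intro sum.cong refl nn_integral_cmult) measurable
  finally show ?thesis .
qed

lemma tendsto_L1norm_M_op_sub:
  assumes int_n: "integrable lborel ((deriv ^^ n) f)"
    and int_even: "\<forall>m\<in>{1..n div 2}. integrable lborel ((deriv ^^ (2*m)) f)"
  shows "((\<lambda>xi. L1norm (\<lambda>x. M_op r n al be xi f x - f x)) \<longlongrightarrow> 0) (at_right 0)"
proof -
  define B where "B m = (LINT x|lborel. \<bar>(deriv ^^ m) f x\<bar>)" for m
  define c where "c m = \<bar>correction_coef r n al be m\<bar>" for m
  define h where "h xi = bound_const r n al be * 2^r * B n * xi^n + (\<Sum>m=1..n div 2. c m * xi^(2*m) * B (2*m))"
    for xi
  have B: "B m \<ge> 0" for m unfolding B_def by (rule integral_nonneg_AE) auto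
  have "L1norm (\<lambda>x. M_op r n al be xi f x - f x) \<le> ennreal (h xi)" if xi: "xi > 0" for xi
  proof -
    have "L1norm (\<lambda>x. M_op r n al be xi f x - f x) \<le> ennreal (bound_const r n al be * 2^r * B n * xi^n)
        + (\<Sum>m=1..n div 2. ennreal (c m * xi^(2*m)) * ennreal (B (2*m)))"
      using L1norm_M_op_sub_le[OF xi] nn_integral_Delta_majorant_le_L1norm[OF xi int_n] int_even
      by (auto simp: B_def c_def L1norm_eq_integral intro: order_trans add_mono)
    also have "(\<Sum>m=1..n div 2. ennreal (c m * xi^(2*m)) * ennreal (B (2*m)))
        = ennreal (\<Sum>m=1..n div 2. c m * xi^(2*m) * B (2*m))"
      using xi B by (subst sum_ennreal[symmetric]) (simp_all add: c_def ennreal_mult)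
    also have "ennreal (bound_const r n al be * 2^r * B n * xi^n) + \<dots> = ennreal (h xi)"
      using xi B bound_const_nonneg by (simp add: h_def c_def ennreal_plus sum_nonneg)
    finally show ?thesis .
  qed
  moreover have "(h \<longlongrightarrow> 0) (at_right 0)"
    unfolding h_def[abs_def] using n_pos by (auto intro!: tendsto_eq_intros sum.neutral simp: power_0_left)
  ultimately show ?thesis by (rule tendsto_at_right_0_ennreal_le)
qed

end

end

theorem theorem2:
  fixes f :: "real \<Rightarrow> real" and r n al :: nat and be :: real
  assumes "r \<ge> 1" and "n \<ge> 1" and "al \<ge> 1"
    and "be > real (n + r + 1) / (2 * real al)"
    and "\<And>k x. k < n \<Longrightarrow> ((deriv ^^ k) f has_real_derivative (deriv ^^ Suc k) f x) (at x)"
    and "continuous_on UNIV ((deriv ^^ n) f)"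
    and "integrable lborel ((deriv ^^ n) f)"
  shows "(\<forall>xi>0. L1norm (Delta_op r n al be xi f)
            \<le> ennreal (bound_const r n al be) * omega1 r ((deriv ^^ n) f) xi * ennreal (xi ^ n))
       \<and> ((\<lambda>xi. L1norm (Delta_op r n al be xi f)) \<longlongrightarrow> 0) (at_right 0)
       \<and> ((\<forall>m\<in>{1..n div 2}. integrable lborel ((deriv ^^ (2*m)) f))
            \<longrightarrow> ((\<lambda>xi. L1norm (\<lambda>x. M_op r n al be xi f x - f x)) \<longlongrightarrow> 0) (at_right 0))"
proof -
  note setting = assms(2,5,6,1,3,4)
  show ?thesis
    using L1norm_Delta_op_le[OF setting] tendsto_L1norm_Delta_op[OF setting assms(7)]
      tendsto_L1norm_M_op_sub[OF setting assms(7)]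
    by blast
qed

end
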